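(* Let $\Lambda$ be a cohomology algebra of $b^+=1$ type with $2\tilde\chi(\Lambda)+3\sigma(\Lambda)\ge0$ falling into Case (1), (3) or (5) below, and let $A=aF+bB$ be a reduced class with $A\cdot A\ge0$. Then: Case (1): $h(A)<0$ iff $a>1$ and $b=0$; $h(A)=0$ iff $a\ge b=1$, or $(a,b)\in\{(1,0),(0,0)\}$. Case (3): $h(A)<0$ iff $a>1$ and $b=0$; $h(A)=0$ iff $(a,b)\in\{(1,0),(0,0)\}$. Case (5): $h(A)<0$ iff $a>1$ and $b=0$; $h(A)=0$ iff $(a,b)\in\{(1,0),(0,0)\}$. In all other cases $h(A)>0$. Moreover, in Case (2) every nonzero $A$ with $A\cdot A\ge0$ has $h(A)>0$.
   Context: Notation: $\Lambda$ a cohomology algebra (graded commutative algebra over $\mathbb{Z}$, free of finite rank in each degree, $p:\Lambda^4\cong\mathbb{Z}$ with perfect pairings); $\Gamma(x,y)=x\cdot y=p(xy)$ on $\Lambda^2$, signature $\sigma$; $I_T\subseteq\Lambda^2$ generated by products of elements of $\Lambda^1$; $\tilde b_1=b_1-\mathrm{rank}\{x\in\Lambda^1:x\Lambda^1=0\}$; $\tilde\chi=2+b_2-2\tilde b_1$. Characteristic: $c\cdot A\equiv A\cdot A\pmod2$ for all $A$. Adjunction class: characteristic $c$ with (I) $c\cdot c>\sigma$, or (II) $c\cdot c\ge2\tilde\chi+3\sigma$ and, if $I_T\ne0$, $c\cdot x\ne0$ for some $x\in I_T$. $h_c(A)=1+\frac{A\cdot A-|c\cdot A|}{2}$ for $A\ne0$,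 $h_c(0)=0$; $h(A)=\max_c h_c(A)$. $U=\begin{pmatrix}0&1\\1&0\end{pmatrix}$, $E$ the positive definite $E_8$ form. (1) $I_T=0$, $\Gamma\cong U$; basis $\{F,B\}$, $F\cdot F=B\cdot B=0$, $F\cdot B=1$; reduced: $aF+bB$, $a\ge|b|\ge0$. (2) $I_T=0$, $\Gamma\cong U\oplus(-E)$. (3) $\tilde b_1=2$, $\Gamma\cong U$; $F$ generates $I_T$, basis $\{F,B\}$, $F\cdot F=B\cdot B=0$, $F\cdot B=1$; reduced: $aF+bB$ with $a>0$, or $a=0,b\ge0$. (5) $\tilde b_1=2$, $\Gamma\cong\langle1\rangle\oplus\langle-1\rangle$; $F$ generates $I_T$, basis $\{F,B\}$, $F\cdot F=0$, $F\cdot B=B\cdot B=1$; reduced: $aF+bB$ with $a>0$, or $a=0,b\ge0$. *)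

theory Defs
  imports Complex_Main
begin

text \<open>
A cohomology algebra \<Lambda> = \<Lambda>^0 + ... + \<Lambda>^4 over the integers, each \<Lambda>^k free of
finite rank r k, is encoded by the ranks r :: nat \<Rightarrow> nat and a product
mu i j : \<Lambda>^i \<times> \<Lambda>^j \<rightarrow> \<Lambda>^(i+j) (for i + j \<le> 4).
An element of \<Lambda>^k is a coordinate vector nat \<Rightarrow> int supported on {0..<r k}.
The orientation p : \<Lambda>^4 \<cong> Z is the (single) coordinate 0 of \<Lambda>^4.
\<close>

type_synonym ivec = "nat \<Rightarrow> int"
type_synonym cprod = "nat \<Rightarrow> nat \<Rightarrow> ivec \<Rightarrow> ivec \<Rightarrow> ivec"

definition vzero :: ivec where "vzero = (\<lambda>_. 0)"
definition vadd :: "ivec \<Rightarrow> ivec \<Rightarrow> ivec" where "vadd x y = (\<lambda>k. x k + y k)"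
definition smul :: "int \<Rightarrow> ivec \<Rightarrow> ivec" where "smul c x = (\<lambda>k. c * x k)"
definition unitv :: "nat \<Rightarrow> ivec" where "unitv j = (\<lambda>i. if i = j then 1 else 0)"

definition Deg :: "(nat \<Rightarrow> nat) \<Rightarrow> nat \<Rightarrow> ivec set" where
  "Deg r k = {x. \<forall>i\<ge>r k. x i = 0}"

definition ca_pair :: "cprod \<Rightarrow> nat \<Rightarrow> ivec \<Rightarrow> ivec \<Rightarrow> int" where
  "ca_pair mu k x y = mu k (4 - k) x y 0"

definition cohomology_algebra :: "(nat \<Rightarrow> nat) \<Rightarrow> cprod \<Rightarrow> bool" where
  "cohomology_algebra r mu \<longleftrightarrow>
     r 4 = 1 \<and>
     (\<forall>i j x y. i + j \<le> 4 \<longrightarrow> x \<in> Deg r i \<longrightarrow> y \<in> Deg r j \<longrightarrow> mu i j x y \<in> Deg r (i + j)) \<and>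
     (\<forall>i j x y z. i + j \<le> 4 \<longrightarrow> x \<in> Deg r i \<longrightarrow> y \<in> Deg r i \<longrightarrow> z \<in> Deg r j \<longrightarrow>
         mu i j (vadd x y) z = vadd (mu i j x z) (mu i j y z)) \<and>
     (\<forall>i j x y z. i + j \<le> 4 \<longrightarrow> x \<in> Deg r i \<longrightarrow> y \<in> Deg r j \<longrightarrow> z \<in> Deg r j \<longrightarrow>
         mu i j x (vadd y z) = vadd (mu i j x y) (mu i j x z)) \<and>
     (\<forall>i j k x y z. i + j + k \<le> 4 \<longrightarrow> x \<in> Deg r i \<longrightarrow> y \<in> Deg r j \<longrightarrow> z \<in> Deg r k \<longrightarrow>
         mu (i + j) k (mu i j x y) z = mu i (j + k) x (mu j k y z)) \<and>
     (\<forall>i j x y. i + j \<le> 4 \<longrightarrow> x \<in> Deg r i \<longrightarrow> y \<in> Deg r j \<longrightarrow>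
         mu i j x y = smul ((-1) ^ (i * j)) (mu j i y x)) \<and>
     unitv 0 \<in> Deg r 0 \<and>
     (\<forall>k x. k \<le> 4 \<longrightarrow> x \<in> Deg r k \<longrightarrow> mu 0 k (unitv 0) x = x) \<and>
     (\<forall>k\<le>4. bij_betw (\<lambda>x j. if j < r (4 - k) then ca_pair mu k x (unitv j) else 0)
                 (Deg r k) (Deg r (4 - k)))"

definition ca_Gamma :: "cprod \<Rightarrow> ivec \<Rightarrow> ivec \<Rightarrow> int" where
  "ca_Gamma mu x y = mu 2 2 x y 0"

definition posdef_gram :: "nat \<Rightarrow> (nat \<Rightarrow> nat \<Rightarrow> real) \<Rightarrow> bool" where
  "posdef_gram n G \<longleftrightarrow>
     (\<forall>x :: nat \<Rightarrow> real. (\<exists>i<n. x i \<noteq> 0) \<longrightarrow> (\<Sum>i<n. \<Sum>j<n. x i * G i j * x j) > 0)"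

text \<open>b^+ (resp. b^-): maximal dimension of a subspace on which \<Gamma> is positive
  (resp. negative) definite; it suffices to range over integral vectors.\<close>
definition ca_bplus :: "(nat \<Rightarrow> nat) \<Rightarrow> cprod \<Rightarrow> nat" where
  "ca_bplus r mu = Max {n. \<exists>v. (\<forall>i<n. v i \<in> Deg r 2) \<and>
       posdef_gram n (\<lambda>i j. real_of_int (ca_Gamma mu (v i) (v j)))}"

definition ca_bminus :: "(nat \<Rightarrow> nat) \<Rightarrow> cprod \<Rightarrow> nat" where
  "ca_bminus r mu = Max {n. \<exists>v. (\<forall>i<n. v i \<in> Deg r 2) \<and>
       posdef_gram n (\<lambda>i j. - real_of_int (ca_Gamma mu (v i) (v j)))}"

definition ca_sigma :: "(nat \<Rightarrow> nat) \<Rightarrow> cprod \<Rightarrow> int" where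
  "ca_sigma r mu = int (ca_bplus r mu) - int (ca_bminus r mu)"

text \<open>I_T: subgroup of \<Lambda>^2 generated by products of elements of \<Lambda>^1
  (by bilinearity, the sums of such products)\<close>
definition ca_IT :: "(nat \<Rightarrow> nat) \<Rightarrow> cprod \<Rightarrow> ivec set" where
  "ca_IT r mu = {(\<lambda>k. \<Sum>i<n. mu 1 1 (u i) (w i) k) | (n::nat) u w.
                    \<forall>i<n. u i \<in> Deg r 1 \<and> w i \<in> Deg r 1}"

definition lin_indep_Z :: "ivec set \<Rightarrow> bool" where
  "lin_indep_Z T \<longleftrightarrow> (\<forall>c :: ivec \<Rightarrow> int. (\<forall>k. (\<Sum>v\<in>T. c v * v k) = 0) \<longrightarrow> (\<forall>v\<in>T. c v = 0))"

definition zrank :: "ivec set \<Rightarrow> nat" where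
  "zrank S = Max {card T | T. T \<subseteq> S \<and> finite T \<and> lin_indep_Z T}"

definition ca_b1tilde :: "(nat \<Rightarrow> nat) \<Rightarrow> cprod \<Rightarrow> int" where
  "ca_b1tilde r mu = int (r 1) -
     int (zrank {x \<in> Deg r 1. \<forall>y\<in>Deg r 1. mu 1 1 x y = vzero})"

definition ca_chitilde :: "(nat \<Rightarrow> nat) \<Rightarrow> cprod \<Rightarrow> int" where
  "ca_chitilde r mu = 2 + int (r 2) - 2 * ca_b1tilde r mu"

definition characteristic :: "(nat \<Rightarrow> nat) \<Rightarrow> cprod \<Rightarrow> ivec \<Rightarrow> bool" where
  "characteristic r mu c \<longleftrightarrow> c \<in> Deg r 2 \<and>
     (\<forall>A\<in>Deg r 2. ca_Gamma mu c A mod 2 = ca_Gamma mu A A mod 2)"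

definition adjunction_class :: "(nat \<Rightarrow> nat) \<Rightarrow> cprod \<Rightarrow> ivec \<Rightarrow> bool" where
  "adjunction_class r mu c \<longleftrightarrow> characteristic r mu c \<and>
     (ca_Gamma mu c c > ca_sigma r mu \<or>
      (ca_Gamma mu c c \<ge> 2 * ca_chitilde r mu + 3 * ca_sigma r mu \<and>
       (ca_IT r mu \<noteq> {vzero} \<longrightarrow> (\<exists>x\<in>ca_IT r mu. ca_Gamma mu c x \<noteq> 0))))"

definition h_c :: "cprod \<Rightarrow> ivec \<Rightarrow> ivec \<Rightarrow> int" where
  "h_c mu c A = (if A = vzero then 0
                 else 1 + (ca_Gamma mu A A - \<bar>ca_Gamma mu c A\<bar>) div 2)"

definition h_fun :: "(nat \<Rightarrow> nat) \<Rightarrow> cprod \<Rightarrow> ivec \<Rightarrow> int" where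
  "h_fun r mu A = (GREATEST v. \<exists>c. adjunction_class r mu c \<and> v = h_c mu c A)"

definition basis_with_gram :: "(nat \<Rightarrow> nat) \<Rightarrow> cprod \<Rightarrow> nat \<Rightarrow> (nat \<Rightarrow> ivec) \<Rightarrow> (nat \<Rightarrow> nat \<Rightarrow> int) \<Rightarrow> bool" where
  "basis_with_gram r mu n e G \<longleftrightarrow>
     (\<forall>i<n. e i \<in> Deg r 2) \<and>
     (\<forall>A\<in>Deg r 2. \<exists>!a. (\<forall>i\<ge>n. a i = 0) \<and> A = (\<lambda>k. \<Sum>i<n. a i * e i k)) \<and>
     (\<forall>i<n. \<forall>j<n. ca_Gamma mu (e i) (e j) = G i j)"

definition two_basis :: "ivec \<Rightarrow> ivec \<Rightarrow> nat \<Rightarrow> ivec" where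
  "two_basis F B = (\<lambda>i. if i = 0 then F else B)"

definition gram2 :: "int \<Rightarrow> int \<Rightarrow> int \<Rightarrow> nat \<Rightarrow> nat \<Rightarrow> int" where
  "gram2 f fb bb = (\<lambda>i j. if i = 0 \<and> j = 0 then f else if i = 1 \<and> j = 1 then bb else fb)"

definition E8_adj :: "nat \<Rightarrow> nat \<Rightarrow> bool" where
  "E8_adj i j \<longleftrightarrow> (i < 7 \<and> j < 7 \<and> (i = j + 1 \<or> j = i + 1)) \<or> {i, j} = {4, 7}"

definition E8 :: "nat \<Rightarrow> nat \<Rightarrow> int" where
  "E8 i j = (if i = j then 2 else if E8_adj i j then -1 else 0)"

definition U_minus_E8 :: "nat \<Rightarrow> nat \<Rightarrow> int" where
  "U_minus_E8 i j = (if i < 2 \<and> j < 2 then (if i = j then 0 else 1)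
                      else if 2 \<le> i \<and> 2 \<le> j then - E8 (i - 2) (j - 2) else 0)"

definition lincomb2 :: "int \<Rightarrow> ivec \<Rightarrow> int \<Rightarrow> ivec \<Rightarrow> ivec" where
  "lincomb2 a F b B = (\<lambda>k. a * F k + b * B k)"

end

theory Submission
  imports Defs
begin

text \<open>
  In the rank-two cases b^- = 1, so sigma = 0. In Case (1), I_T = 0 forces tilde-b_1 = 0, hence
  tilde-chi >= 2, and the adjunction classes are exactly x F + y B with x, y even and x y > 0;
  minimising |c . A| over them gives h(a F + b B) = (a - 1)(b - 1) in closed form.
  In Cases (3) and (5) the rank of Lambda^2 is 2, so 2 tilde-chi + 3 sigma <= 0 and
  -(B . B) F + 2 B is an adjunction class, while the I_T condition forces c . F <> 0 for every
  adjunction class; this gives h(a F) = 1 - a, and the single witness already gives h >= 1 off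
  the line through F. In Case (2) the form is even and b^- >= 2, so c = 0 is an adjunction class
  and h(A) >= 1 + A . A / 2.
\<close>

section \<open>Integer vectors and their rank\<close>

lemma Deg_vadd [simp]: "x \<in> Deg r k \<Longrightarrow> y \<in> Deg r k \<Longrightarrow> vadd x y \<in> Deg r k"
  by (simp add: Deg_def vadd_def)

lemma Deg_smul [simp]: "x \<in> Deg r k \<Longrightarrow> smul c x \<in> Deg r k"
  by (simp add: Deg_def smul_def)

lemma Deg_vzero [simp]: "vzero \<in> Deg r k"
  by (simp add: Deg_def vzero_def)

lemma Deg_lincomb2 [simp]: "F \<in> Deg r k \<Longrightarrow> B \<in> Deg r k \<Longrightarrow> lincomb2 a F b B \<in> Deg r k"
  by (simp add: Deg_def lincomb2_def)

lemma Deg_sum: "(\<And>i. i < n \<Longrightarrow> e i \<in> Deg r k) \<Longrightarrow> (\<lambda>t. \<Sum>i<n. a i * e i t) \<in> Deg r k"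
  by (simp add: Deg_def)

lemma lincomb2_eq_vadd: "lincomb2 a F b B = vadd (smul a F) (smul b B)"
  by (simp add: lincomb2_def vadd_def smul_def)

lemma lincomb2_zero [simp]: "lincomb2 0 F 0 B = vzero"
  by (simp add: lincomb2_def vzero_def)

lemma lincomb2_zero_right: "lincomb2 a F 0 B = smul a F"
  by (simp add: lincomb2_def smul_def)

lemma smul_zero_left [simp]: "smul 0 x = vzero"
  by (simp add: smul_def vzero_def)

lemma smul_eq_vzero_iff: "smul a x = vzero \<longleftrightarrow> a = 0 \<or> x = vzero"
  by (auto simp: smul_def vzero_def fun_eq_iff)

lemma lin_indep_Z_image:
  assumes "finite S"
    and indep: "\<And>d. \<forall>k. (\<Sum>v\<in>S. d v * g v k) = 0 \<Longrightarrow> \<forall>v\<in>S. d v = (0::int)"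
  shows "inj_on g S" and "lin_indep_Z (g ` S)"
proof -
  show inj: "inj_on g S"
  proof (rule inj_onI, rule ccontr)
    fix v1 v2 assume v: "v1 \<in> S" "v2 \<in> S" "g v1 = g v2" "v1 \<noteq> v2"
    define d where "d u = (if u = v1 then 1 else 0) - (if u = v2 then 1 else (0::int))" for u
    have "d v * g v k = (if v = v1 then g v k else 0) - (if v = v2 then g v k else 0)" for v k
      by (simp add: d_def left_diff_distrib)
    then have "(\<Sum>v\<in>S. d v * g v k) = g v1 k - g v2 k" for k
      using assms(1) v(1,2) by (simp add: sum_subtractf)
    then have "d v1 = 0" using indep v by simp
    then show False using v by (simp add: d_def)
  qed
  show "lin_indep_Z (g ` S)"
    unfolding lin_indep_Z_def
  proof (intro allI impI)
    fix c :: "ivec \<Rightarrow> int" assume "\<forall>k. (\<Sum>u\<in>g ` S. c u * u k) = 0"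
    then have "\<forall>k. (\<Sum>v\<in>S. c (g v) * g v k) = 0" by (simp add: sum.reindex[OF inj])
    then show "\<forall>u\<in>g ` S. c u = 0" using indep[of "c \<circ> g"] by auto
  qed
qed

text \<open>Induction on the support bound m: a vector w \<in> T with w m \<noteq> 0 clears the m-th
  coordinate of the others (fraction-free Gaussian elimination).\<close>

lemma lin_indep_Z_card_le:
  "finite T \<Longrightarrow> T \<subseteq> {x. \<forall>i\<ge>m. x i = 0} \<Longrightarrow> lin_indep_Z T \<Longrightarrow> card T \<le> m"
proof (induction m arbitrary: T)
  case 0
  then have "\<forall>v\<in>T. (\<lambda>_. 1::int) v = 0"
    unfolding lin_indep_Z_def by (elim allE[of _ "\<lambda>_. 1"]) (auto intro!: sum.neutral)
  then show ?case by (cases "T = {}") auto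
next
  case (Suc m)
  show ?case
  proof (cases "\<forall>v\<in>T. v m = 0")
    case True
    have "T \<subseteq> {x. \<forall>i\<ge>m. x i = 0}"
    proof clarify
      fix x i assume "x \<in> T" "m \<le> i"
      then show "x i = 0" using True Suc.prems(2) by (cases "i = m") auto
    qed
    then show ?thesis using Suc.IH Suc.prems le_SucI by blast
  next
    case False
    then obtain w where w: "w \<in> T" "w m \<noteq> 0" by auto
    define g where "g v = (\<lambda>k. w m * v k - v m * w k)" for v :: ivec
    define T0 where "T0 = T - {w}"
    have fin: "finite T0" using Suc.prems(1) by (simp add: T0_def)
    have indep: "\<forall>v\<in>T0. d v = 0" if hd: "\<forall>k. (\<Sum>v\<in>T0. d v * g v k) = 0" for d
    proof -
      define c where "c u = (if u = w then - (\<Sum>v\<in>T0. d v * v m) else d u * w m)" for u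
      have "(\<Sum>u\<in>T. c u * u k) = (\<Sum>v\<in>T0. d v * g v k)" for k
      proof -
        have "(\<Sum>u\<in>T. c u * u k) = c w * w k + (\<Sum>u\<in>T0. c u * u k)"
          using Suc.prems(1) w(1) unfolding T0_def by (simp add: sum.remove)
        also have "(\<Sum>u\<in>T0. c u * u k) = (\<Sum>u\<in>T0. d u * w m * u k)"
          by (intro sum.cong) (auto simp: c_def T0_def)
        also have "c w * w k = - (\<Sum>v\<in>T0. d v * v m * w k)"
          by (simp add: c_def sum_distrib_right)
        finally show ?thesis
          by (simp add: g_def sum_subtractf[symmetric] algebra_simps)
      qed
      then have "\<forall>u\<in>T. c u = 0" using Suc.prems(3) hd unfolding lin_indep_Z_def by simp
      show ?thesis
      proof
        fix v assume "v \<in> T0"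
        then have "c v = 0" "v \<noteq> w" using \<open>\<forall>u\<in>T. c u = 0\<close> by (auto simp: T0_def)
        then show "d v = 0" using w(2) by (simp add: c_def)
      qed
    qed
    note img = lin_indep_Z_image[OF fin, of g, OF indep]
    have "g ` T0 \<subseteq> {x. \<forall>i\<ge>m. x i = 0}"
    proof clarify
      fix v i assume "v \<in> T0" "m \<le> i"
      then have "\<forall>i\<ge>Suc m. v i = 0" "\<forall>i\<ge>Suc m. w i = 0"
        using Suc.prems(2) w(1) by (auto simp: T0_def)
      then show "g v i = 0" using \<open>m \<le> i\<close> by (cases "i = m") (auto simp: g_def)
    qed
    then have "card (g ` T0) \<le> m" using Suc.IH fin img(2) by blast
    moreover have "card T = Suc (card T0)"
      using Suc.prems(1) w(1) unfolding T0_def by (metis card_Suc_Diff1)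
    ultimately show ?thesis using card_image[OF img(1)] by simp
  qed
qed

lemma zrank_Deg: "zrank (Deg r k) = r k"
proof -
  let ?S = "{card T | T. T \<subseteq> Deg r k \<and> finite T \<and> lin_indep_Z T}"
  have le: "n \<le> r k" if "n \<in> ?S" for n
    using that lin_indep_Z_card_le unfolding Deg_def by blast
  have "\<forall>j<r k. d j = 0" if "\<forall>i. (\<Sum>j\<in>{..<r k}. d j * unitv j i) = 0" for d
  proof (intro allI impI)
    fix j assume "j < r k"
    have "d l * unitv l j = (if l = j then d j else 0)" for l by (simp add: unitv_def)
    then have "(\<Sum>l\<in>{..<r k}. d l * unitv l j) = d j" using \<open>j < r k\<close> by simp
    then show "d j = 0" using that by simp
  qed
  then have units: "inj_on unitv {..<r k}" "lin_indep_Z (unitv ` {..<r k})"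
    using lin_indep_Z_image[of "{..<r k}" unitv] by auto
  have "r k \<in> ?S"
  proof (intro CollectI exI conjI)
    show "r k = card (unitv ` {..<r k})" using card_image[OF units(1)] by simp
    show "unitv ` {..<r k} \<subseteq> Deg r k" by (auto simp: Deg_def unitv_def)
  qed (use units(2) in simp_all)
  moreover have "finite ?S" by (rule finite_subset[of _ "{..r k}"]) (use le in auto)
  ultimately show ?thesis unfolding zrank_def by (rule Max_eqI[rotated 2]) (use le in auto)
qed

lemma det3_rank_two_product:
  fixes m :: "nat \<Rightarrow> nat \<Rightarrow> int" and p q x y :: "nat \<Rightarrow> int"
  assumes "\<And>i j. i < 3 \<Longrightarrow> j < 3 \<Longrightarrow> m i j = p i * x j + q i * y j"
  shows "m 0 0 * (m 1 1 * m 2 2 - m 1 2 * m 2 1) - m 0 1 * (m 1 0 * m 2 2 - m 1 2 * m 2 0)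
           + m 0 2 * (m 1 0 * m 2 1 - m 1 1 * m 2 0) = 0"
  by (simp add: assms algebra_simps)

lemma rank_le_2_if_spanned:
  assumes span: "\<forall>A\<in>Deg r k. \<exists>p q. A = lincomb2 p F q B"
  shows "r k \<le> 2"
proof (rule ccontr)
  assume "\<not> r k \<le> 2"
  then have "\<forall>i<3. \<exists>p q. unitv i = lincomb2 p F q B"
    using span by (auto simp: Deg_def unitv_def)
  then obtain p q where pq: "\<And>i. i < 3 \<Longrightarrow> unitv i = lincomb2 (p i) F (q i) B"
    by metis
  have "(if i = j then 1 else 0) = p i * F j + q i * B j" if "i < 3" for i j
    using fun_cong[OF pq[OF that], of j] by (auto simp: lincomb2_def unitv_def split: if_splits)
  from det3_rank_two_product[where m = "\<lambda>i j. if i = j then 1 else 0", OF this]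
  show False by simp
qed

section \<open>The intersection form\<close>

locale coh_alg =
  fixes r :: "nat \<Rightarrow> nat" and mu :: cprod
  assumes alg: "cohomology_algebra r mu"
begin

abbreviation G :: "ivec \<Rightarrow> ivec \<Rightarrow> int" where "G \<equiv> ca_Gamma mu"

lemma mu_add_right:
  "i + j \<le> 4 \<Longrightarrow> x \<in> Deg r i \<Longrightarrow> y \<in> Deg r j \<Longrightarrow> z \<in> Deg r j \<Longrightarrow>
    mu i j x (vadd y z) = vadd (mu i j x y) (mu i j x z)"
  using alg unfolding cohomology_algebra_def by blast

lemma mu_commute:
  "i + j \<le> 4 \<Longrightarrow> x \<in> Deg r i \<Longrightarrow> y \<in> Deg r j \<Longrightarrow> mu i j x y = smul ((-1) ^ (i * j)) (mu j i y x)"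
  using alg unfolding cohomology_algebra_def by blast

lemma Gamma_add_right:
  "x \<in> Deg r 2 \<Longrightarrow> y \<in> Deg r 2 \<Longrightarrow> z \<in> Deg r 2 \<Longrightarrow> G x (vadd y z) = G x y + G x z"
  using mu_add_right[of 2 2 x y z] by (simp add: ca_Gamma_def vadd_def)

lemma Gamma_commute: "x \<in> Deg r 2 \<Longrightarrow> y \<in> Deg r 2 \<Longrightarrow> G x y = G y x"
  using mu_commute[of 2 2 x y] by (simp add: ca_Gamma_def smul_def)

lemma Gamma_smul_right:
  assumes x: "x \<in> Deg r 2" and y: "y \<in> Deg r 2"
  shows "G x (smul c y) = c * G x y"
proof -
  have add: "G x (smul (c + d) y) = G x (smul c y) + G x (smul d y)" for c d
    using Gamma_add_right[OF x Deg_smul[OF y] Deg_smul[OF y], of c d]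
    by (simp add: smul_def vadd_def distrib_right)
  have "smul 1 y = y" by (simp add: smul_def)
  then have one: "G x (smul 1 y) = G x y" by simp
  show ?thesis
  proof (induction c rule: int_induct[where k = 0])
    case base
    show ?case using add[of 0 0] by simp
  next
    case (step1 i)
    then show ?case using add[of i 1] one by (simp add: distrib_right)
  next
    case (step2 i)
    then show ?case using add[of "i - 1" 1] one by (simp add: left_diff_distrib)
  qed
qed

lemma Gamma_smul_left: "x \<in> Deg r 2 \<Longrightarrow> y \<in> Deg r 2 \<Longrightarrow> G (smul c y) x = c * G y x"
  using Gamma_smul_right Gamma_commute by (metis Deg_smul)

lemma Gamma_lincomb2_right:
  "x \<in> Deg r 2 \<Longrightarrow> F \<in> Deg r 2 \<Longrightarrow> B \<in> Deg r 2 \<Longrightarrow>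
    G x (lincomb2 a F b B) = a * G x F + b * G x B"
  by (simp add: lincomb2_eq_vadd Gamma_add_right Gamma_smul_right)

lemma Gamma_lincomb2_left:
  "x \<in> Deg r 2 \<Longrightarrow> F \<in> Deg r 2 \<Longrightarrow> B \<in> Deg r 2 \<Longrightarrow>
    G (lincomb2 a F b B) x = a * G F x + b * G B x"
  using Gamma_lincomb2_right Gamma_commute by (metis Deg_lincomb2)

lemma Gamma_lincomb2:
  "F \<in> Deg r 2 \<Longrightarrow> B \<in> Deg r 2 \<Longrightarrow>
    G (lincomb2 a F b B) (lincomb2 a' F b' B) = a * a' * G F F + (a * b' + b * a') * G F B + b * b' * G B B"
  using Gamma_lincomb2_right Gamma_lincomb2_left Gamma_commute by (simp add: algebra_simps)

lemma Gamma_vzero_left: "x \<in> Deg r 2 \<Longrightarrow> G vzero x = 0"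
  using Gamma_smul_left[OF _ Deg_vzero, of x 0] by simp

lemma Gamma_vzero_right: "x \<in> Deg r 2 \<Longrightarrow> G x vzero = 0"
  using Gamma_vzero_left Gamma_commute by (metis Deg_vzero)

lemma Gamma_sum_right:
  assumes "x \<in> Deg r 2" and "\<And>i. i < (n::nat) \<Longrightarrow> e i \<in> Deg r 2"
  shows "G x (\<lambda>t. \<Sum>i<n. a i * e i t) = (\<Sum>i<n. a i * G x (e i))"
  using assms(2)
proof (induction n)
  case 0
  have "(\<lambda>t. \<Sum>i<0. a i * e i t) = vzero" by (simp add: vzero_def)
  then show ?case using Gamma_vzero_right[OF assms(1)] by simp
next
  case (Suc n)
  have "(\<lambda>t. \<Sum>i<Suc n. a i * e i t) = vadd (\<lambda>t. \<Sum>i<n. a i * e i t) (smul (a n) (e n))"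
    by (simp add: vadd_def smul_def)
  moreover have "(\<lambda>t. \<Sum>i<n. a i * e i t) \<in> Deg r 2" "e n \<in> Deg r 2"
    using Suc.prems by (auto intro: Deg_sum)
  ultimately show ?case
    using Suc by (simp add: Gamma_add_right[OF assms(1)] Gamma_smul_right[OF assms(1)])
qed

lemma Gamma_sum_sum:
  assumes "\<And>i. i < (n::nat) \<Longrightarrow> e i \<in> Deg r 2"
  shows "G (\<lambda>t. \<Sum>i<n. a i * e i t) (\<lambda>t. \<Sum>i<n. b i * e i t) = (\<Sum>i<n. \<Sum>j<n. a i * b j * G (e i) (e j))"
proof -
  have "G (\<lambda>t. \<Sum>i<n. a i * e i t) (\<lambda>t. \<Sum>j<n. b j * e j t)
      = G (\<lambda>t. \<Sum>j<n. b j * e j t) (\<lambda>t. \<Sum>i<n. a i * e i t)"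
    using assms by (intro Gamma_commute Deg_sum)
  also have "\<dots> = (\<Sum>i<n. a i * G (\<lambda>t. \<Sum>j<n. b j * e j t) (e i))"
    using assms by (intro Gamma_sum_right Deg_sum)
  also have "\<dots> = (\<Sum>i<n. a i * (\<Sum>j<n. b j * G (e i) (e j)))"
    using assms by (intro sum.cong refl) (simp add: Gamma_commute[OF Deg_sum] Gamma_sum_right)
  finally show ?thesis by (simp add: sum_distrib_left mult.assoc)
qed

definition neg_def_family :: "nat \<Rightarrow> (nat \<Rightarrow> ivec) \<Rightarrow> bool" where
  "neg_def_family n v \<longleftrightarrow>
     (\<forall>i<n. v i \<in> Deg r 2) \<and> posdef_gram n (\<lambda>i j. - real_of_int (G (v i) (v j)))"

lemma neg_def_family_square_neg:
  assumes v: "neg_def_family n v" and c: "\<exists>i<n. c i \<noteq> 0"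
  shows "G (\<lambda>t. \<Sum>i<n. c i * v i t) (\<lambda>t. \<Sum>i<n. c i * v i t) < 0"
proof -
  have "posdef_gram n (\<lambda>i j. - real_of_int (G (v i) (v j)))"
    using v unfolding neg_def_family_def by simp
  then have "(\<Sum>i<n. \<Sum>j<n. real_of_int (c i) * - real_of_int (G (v i) (v j)) * real_of_int (c j)) > 0"
    unfolding posdef_gram_def using c by (auto dest: spec[where x = "\<lambda>i. real_of_int (c i)"])
  moreover have "(\<Sum>i<n. \<Sum>j<n. real_of_int (c i) * - real_of_int (G (v i) (v j)) * real_of_int (c j))
      = - real_of_int (\<Sum>i<n. \<Sum>j<n. c i * c j * G (v i) (v j))"
    by (simp add: of_int_sum sum_negf[symmetric] algebra_simps)
  moreover have "(\<Sum>i<n. \<Sum>j<n. c i * c j * G (v i) (v j))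
      = G (\<lambda>t. \<Sum>i<n. c i * v i t) (\<lambda>t. \<Sum>i<n. c i * v i t)"
    using v unfolding neg_def_family_def by (simp add: Gamma_sum_sum)
  ultimately show ?thesis by linarith
qed

lemma neg_def_family_le_rank:
  assumes v: "neg_def_family n v"
  shows "n \<le> r 2"
proof -
  have "\<forall>i\<in>{..<n}. d i = 0" if "\<forall>k. (\<Sum>i\<in>{..<n}. d i * v i k) = 0" for d
  proof (rule ccontr)
    assume "\<not> (\<forall>i\<in>{..<n}. d i = 0)"
    then have "G (\<lambda>t. \<Sum>i<n. d i * v i t) (\<lambda>t. \<Sum>i<n. d i * v i t) < 0"
      using neg_def_family_square_neg[OF v] by auto
    moreover have "(\<lambda>t. \<Sum>i<n. d i * v i t) = vzero" using that by (simp add: vzero_def fun_eq_iff)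
    ultimately show False using Gamma_vzero_left[OF Deg_vzero] by simp
  qed
  then have indep: "inj_on v {..<n}" "lin_indep_Z (v ` {..<n})"
    using lin_indep_Z_image[of "{..<n}" v] by auto
  have "v ` {..<n} \<subseteq> {x. \<forall>i\<ge>r 2. x i = 0}"
    using v unfolding neg_def_family_def Deg_def by auto
  then have "card (v ` {..<n}) \<le> r 2" by (intro lin_indep_Z_card_le indep(2)) simp
  then show ?thesis using card_image[OF indep(1)] by simp
qed

lemma ca_bminus_eq_Max: "ca_bminus r mu = Max {n. \<exists>v. neg_def_family n v}"
  unfolding ca_bminus_def neg_def_family_def by (rule refl)

lemma finite_neg_def_family_sizes: "finite {n. \<exists>v. neg_def_family n v}"
  by (rule finite_subset[of _ "{..r 2}"]) (auto dest: neg_def_family_le_rank)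

lemma ca_bminus_ge: "neg_def_family n v \<Longrightarrow> n \<le> ca_bminus r mu"
  unfolding ca_bminus_eq_Max by (rule Max_ge[OF finite_neg_def_family_sizes]) blast

lemma ca_bminus_le:
  assumes "\<And>n v. neg_def_family n v \<Longrightarrow> n \<le> m"
  shows "ca_bminus r mu \<le> m"
proof -
  have "neg_def_family 0 v" for v by (simp add: neg_def_family_def posdef_gram_def)
  then show ?thesis
    unfolding ca_bminus_eq_Max using assms by (intro Max.boundedI[OF finite_neg_def_family_sizes]) auto
qed

end

section \<open>The function h\<close>

lemma GreatestI_bounded_int:
  fixes P :: "int \<Rightarrow> bool"
  assumes "P v0" and bound: "\<And>v. P v \<Longrightarrow> v \<le> M"
  shows "P (GREATEST v. P v) \<and> (\<forall>v. P v \<longrightarrow> v \<le> (GREATEST v. P v))"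
proof -
  let ?S = "{v. P v \<and> v0 \<le> v}"
  have fin: "finite ?S" by (rule finite_subset[of _ "{v0..M}"]) (auto simp: bound)
  have max: "Max ?S \<in> ?S" using fin assms(1) by (intro Max_in) auto
  have le: "v \<le> Max ?S" if "P v" for v
  proof (cases "v0 \<le> v")
    case True
    then show ?thesis using fin that by (intro Max_ge) auto
  next
    case False
    then show ?thesis using max by auto
  qed
  have "(GREATEST v. P v) = Max ?S" using max le by (intro Greatest_equality) auto
  then show ?thesis using max le by simp
qed

lemma h_c_le: "h_c mu c A \<le> max 0 (1 + ca_Gamma mu A A div 2)"
proof -
  have "(ca_Gamma mu A A - \<bar>ca_Gamma mu c A\<bar>) div 2 \<le> ca_Gamma mu A A div 2"
    by (intro zdiv_mono1) auto
  then show ?thesis unfolding h_c_def by auto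
qed

lemma h_fun_ge:
  assumes "adjunction_class r mu c"
  shows "h_c mu c A \<le> h_fun r mu A"
proof -
  let ?P = "\<lambda>v. \<exists>c. adjunction_class r mu c \<and> v = h_c mu c A"
  have p: "?P (h_c mu c A)" using assms by blast
  have "v \<le> max 0 (1 + ca_Gamma mu A A div 2)" if "?P v" for v using that h_c_le by blast
  from GreatestI_bounded_int[of ?P, OF p this] have "\<forall>v. ?P v \<longrightarrow> v \<le> (GREATEST v. ?P v)" by blast
  then show ?thesis unfolding h_fun_def using p by blast
qed

lemma h_fun_eqI:
  assumes "adjunction_class r mu c0" and "\<And>c. adjunction_class r mu c \<Longrightarrow> h_c mu c A \<le> M"
    and "h_c mu c0 A = M"
  shows "h_fun r mu A = M"
  unfolding h_fun_def using assms by (intro Greatest_equality) auto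

lemma h_fun_vzero: "adjunction_class r mu c0 \<Longrightarrow> h_fun r mu vzero = 0"
  by (rule h_fun_eqI) (simp_all add: h_c_def)

lemma adjunction_class_characteristic:
  "adjunction_class r mu c \<Longrightarrow> characteristic r mu c"
  by (simp add: adjunction_class_def)

lemma characteristic_Deg: "characteristic r mu c \<Longrightarrow> c \<in> Deg r 2"
  by (simp add: characteristic_def)

section \<open>Rank-two bases\<close>

context coh_alg
begin

lemma basis2_Deg:
  assumes "basis_with_gram r mu 2 (two_basis F B) g"
  shows "F \<in> Deg r 2" "B \<in> Deg r 2"
proof -
  have e: "\<And>i. i < 2 \<Longrightarrow> two_basis F B i \<in> Deg r 2"
    using assms unfolding basis_with_gram_def by blast
  show "F \<in> Deg r 2" using e[of 0] by (simp add: two_basis_def)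
  show "B \<in> Deg r 2" using e[of 1] by (simp add: two_basis_def)
qed

lemma basis2_Gamma:
  assumes "basis_with_gram r mu 2 (two_basis F B) (gram2 f fb bb)"
  shows "G F F = f" "G F B = fb" "G B F = fb" "G B B = bb"
proof -
  have g: "\<And>i j. i < 2 \<Longrightarrow> j < 2 \<Longrightarrow> G (two_basis F B i) (two_basis F B j) = gram2 f fb bb i j"
    using assms unfolding basis_with_gram_def by blast
  show "G F F = f" using g[of 0 0] by (simp add: two_basis_def gram2_def)
  show "G F B = fb" using g[of 0 1] by (simp add: two_basis_def gram2_def)
  show "G B F = fb" using g[of 1 0] by (simp add: two_basis_def gram2_def)
  show "G B B = bb" using g[of 1 1] by (simp add: two_basis_def gram2_def)
qed

lemma two_basis_sum: "(\<lambda>k. \<Sum>i<2. c i * two_basis F B i k) = lincomb2 (c 0) F (c 1) B"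
  by (simp add: lincomb2_def two_basis_def numeral_2_eq_2)

lemma basis2_coords:
  assumes "basis_with_gram r mu 2 (two_basis F B) g" and "A \<in> Deg r 2"
  obtains p q where "A = lincomb2 p F q B"
proof -
  have "\<exists>c. A = (\<lambda>k. \<Sum>i<2. c i * two_basis F B i k)"
    using assms unfolding basis_with_gram_def by (meson ex1_implies_ex)
  then show thesis using that unfolding two_basis_sum by blast
qed

lemma lincomb2_eq_vzero_iff:
  assumes "basis_with_gram r mu 2 (two_basis F B) g"
  shows "lincomb2 a F b B = vzero \<longleftrightarrow> a = 0 \<and> b = 0"
proof
  let ?coords = "\<lambda>d. (\<forall>i\<ge>2. d i = 0) \<and> vzero = (\<lambda>k. \<Sum>i<2. d i * two_basis F B i k)"
  assume A: "lincomb2 a F b B = vzero"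
  define c :: "nat \<Rightarrow> int" where "c i = (if i = 0 then a else if i = 1 then b else 0)" for i
  have "\<exists>!d. ?coords d" using assms Deg_vzero unfolding basis_with_gram_def by blast
  then have unique: "Uniq ?coords" by (simp add: ex1_iff_ex_Uniq)
  have "?coords c" using A by (simp add: c_def two_basis_sum)
  moreover have "?coords (\<lambda>_. 0)" by (simp add: vzero_def)
  ultimately have "c = (\<lambda>_. 0)" by (rule Uniq_D[OF unique])
  then have "c 0 = 0" "c 1 = 0" by simp_all
  then show "a = 0 \<and> b = 0" by (simp add: c_def)
qed (simp add: lincomb2_def vzero_def)

lemma basis2_nonzero:
  assumes "basis_with_gram r mu 2 (two_basis F B) g"
  shows "F \<noteq> vzero"
  using lincomb2_eq_vzero_iff[OF assms, of 1 0] by (simp add: lincomb2_zero_right smul_def)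

lemma basis2_rank_le_2:
  assumes "basis_with_gram r mu 2 (two_basis F B) g"
  shows "r 2 \<le> 2"
proof (intro rank_le_2_if_spanned[of r 2 F B] ballI)
  fix A assume "A \<in> Deg r 2"
  then obtain p q where "A = lincomb2 p F q B" by (rule basis2_coords[OF assms])
  then show "\<exists>p q. A = lincomb2 p F q B" by blast
qed

lemma characteristic_even:
  "characteristic r mu c \<Longrightarrow> A \<in> Deg r 2 \<Longrightarrow> even (G c A - G A A)"
  by (simp add: characteristic_def mod_eq_dvd_iff)

lemma characteristic_basis2_iff:
  assumes bas: "basis_with_gram r mu 2 (two_basis F B) (gram2 f fb bb)" and c: "c \<in> Deg r 2"
  shows "characteristic r mu c \<longleftrightarrow> even (G c F - f) \<and> even (G c B - bb)"
proof -
  note FB = basis2_Deg[OF bas] and g = basis2_Gamma[OF bas]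
  have "even (G c A - G A A)" if par: "even (G c F - f)" "even (G c B - bb)" and "A \<in> Deg r 2" for A
  proof -
    obtain p q where A: "A = lincomb2 p F q B" using basis2_coords[OF bas \<open>A \<in> Deg r 2\<close>] .
    have "G c A = p * G c F + q * G c B" using FB c by (simp add: A Gamma_lincomb2_right)
    moreover have "G A A = p * p * f + 2 * (p * q * fb) + q * q * bb" using FB g by (simp add: A Gamma_lincomb2)
    ultimately have "G c A - G A A = p * (G c F - f) + q * (G c B - bb)
                            - (p * p - p) * f - (q * q - q) * bb - 2 * (p * q * fb)"
      by (simp add: algebra_simps)
    moreover have "even (p * p - p)" "even (q * q - q)" by simp_all
    ultimately show ?thesis using par by simp
  qed
  then show ?thesis
    unfolding characteristic_def using c FB g by (auto simp: mod_eq_dvd_iff)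
qed

lemma ca_bminus_basis2:
  assumes bas: "basis_with_gram r mu 2 (two_basis F B) (gram2 0 1 bb)" and bb: "bb < 2"
  shows "ca_bminus r mu = 1"
proof (rule antisym)
  note FB = basis2_Deg[OF bas] and g = basis2_Gamma[OF bas]
  show "ca_bminus r mu \<le> 1"
  proof (rule ca_bminus_le, rule ccontr)
    fix n v assume v: "neg_def_family n v" and n: "\<not> n \<le> 1"
    then have "v 0 \<in> Deg r 2" "v 1 \<in> Deg r 2" unfolding neg_def_family_def by auto
    then obtain p0 q0 p1 q1 where v0: "v 0 = lincomb2 p0 F q0 B" and v1: "v 1 = lincomb2 p1 F q1 B"
      by (metis basis2_coords[OF bas])
    \<comment> \<open>a nontrivial combination of v 0 and v 1 lies on the isotropic line through F\<close>
    define c :: "nat \<Rightarrow> int" where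
      "c i = (if q0 = 0 \<and> q1 = 0 then (if i = 0 then 1 else 0)
              else if i = 0 then q1 else if i = 1 then - q0 else 0)" for i
    have "c 0 \<noteq> 0 \<or> c 1 \<noteq> 0" by (auto simp: c_def)
    moreover have "0 < n" "1 < n" using n by auto
    ultimately have nz: "\<exists>i<n. c i \<noteq> 0" by blast
    have "(\<Sum>i<n. c i * v i t) = (\<Sum>i<2. c i * v i t)" for t
      using n by (intro sum.mono_neutral_right) (auto simp: c_def)
    then have "(\<lambda>t. \<Sum>i<n. c i * v i t) = lincomb2 (c 0 * p0 + c 1 * p1) F (c 0 * q0 + c 1 * q1) B"
      by (simp add: fun_eq_iff numeral_2_eq_2 v0 v1[unfolded One_nat_def] lincomb2_def algebra_simps)
    also have "c 0 * q0 + c 1 * q1 = 0" by (simp add: c_def)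
    finally show False
      using neg_def_family_square_neg[OF v nz] FB g by (simp add: Gamma_lincomb2)
  qed
  have "G (lincomb2 1 F (-1) B) (lincomb2 1 F (-1) B) = bb - 2"
    using FB g by (simp add: Gamma_lincomb2)
  then have "neg_def_family 1 (\<lambda>_. lincomb2 1 F (-1) B)"
    using FB bb by (auto simp: neg_def_family_def posdef_gram_def zero_less_mult_iff mult_less_0_iff)
  then show "1 \<le> ca_bminus r mu" by (rule ca_bminus_ge)
qed

lemma ca_sigma_basis2:
  "ca_bplus r mu = 1 \<Longrightarrow> basis_with_gram r mu 2 (two_basis F B) (gram2 0 1 bb) \<Longrightarrow> bb < 2
    \<Longrightarrow> ca_sigma r mu = 0"
  by (simp add: ca_sigma_def ca_bminus_basis2)

lemma h_fun_smul_isotropic: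
  assumes F: "F \<in> Deg r 2" "F \<noteq> vzero" "G F F = 0"
    and nonzero: "\<And>c. adjunction_class r mu c \<Longrightarrow> G c F \<noteq> 0"
    and c0: "adjunction_class r mu c0" "G c0 F = 2"
    and a: "a \<ge> 1"
  shows "h_fun r mu (smul a F) = 1 - a"
proof -
  have aF: "smul a F \<noteq> vzero" "G (smul a F) (smul a F) = 0"
    using F a by (simp_all add: smul_eq_vzero_iff Gamma_smul_left Gamma_smul_right)
  have h: "h_c mu c (smul a F) = 1 - a * (\<bar>G c F\<bar> div 2) \<and> even (G c F)"
    if "adjunction_class r mu c" for c
  proof -
    have c: "characteristic r mu c" using that by (rule adjunction_class_characteristic)
    then have cD: "c \<in> Deg r 2" by (rule characteristic_Deg)
    have "even (G c F)" using characteristic_even[OF c F(1)] F(3) by simp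
    then obtain t where t: "G c F = 2 * t" by blast
    have "h_c mu c (smul a F) = 1 + (- \<bar>a * G c F\<bar>) div 2"
      unfolding h_c_def using aF by (simp add: Gamma_smul_right[OF cD F(1)])
    also have "\<dots> = 1 - a * (\<bar>G c F\<bar> div 2)" using a by (simp add: t abs_mult)
    finally show ?thesis using \<open>even (G c F)\<close> by simp
  qed
  show ?thesis
  proof (rule h_fun_eqI[OF c0(1)])
    fix c assume adj: "adjunction_class r mu c"
    then have "\<bar>G c F\<bar> div 2 \<ge> 1" using h nonzero by fastforce
    then show "h_c mu c (smul a F) \<le> 1 - a" using h[OF adj] a by (simp add: mult_le_cancel_left1)
  qed (use h[OF c0(1)] c0(2) in simp)
qed

end

section \<open>The rank-two cases\<close>

lemma ca_b1tilde_eq_0: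
  assumes "ca_IT r mu = {vzero}"
  shows "ca_b1tilde r mu = 0"
proof -
  have "mu 1 1 x y = vzero" if "x \<in> Deg r 1" "y \<in> Deg r 1" for x y
  proof -
    have "(\<lambda>k. \<Sum>i<(1::nat). mu 1 1 ((\<lambda>_. x) i) ((\<lambda>_. y) i) k) \<in> ca_IT r mu"
      unfolding ca_IT_def using that
      by (intro CollectI exI[of _ 1] exI[of _ "\<lambda>_. x"] exI[of _ "\<lambda>_. y"]) auto
    then show ?thesis using assms by simp
  qed
  then have "{x \<in> Deg r 1. \<forall>y\<in>Deg r 1. mu 1 1 x y = vzero} = Deg r 1" by blast
  then show ?thesis unfolding ca_b1tilde_def by (simp add: zrank_Deg)
qed

lemma even_pos_ge_2: "even (x::int) \<Longrightarrow> x > 0 \<Longrightarrow> x \<ge> 2"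
  by (elim evenE) auto

lemma even_same_sign_abs_ge:
  fixes x y a b :: int
  assumes "even x" "even y" "x * y > 0" "a \<ge> 0" "b \<ge> 0"
  shows "2 * a + 2 * b \<le> \<bar>x * b + y * a\<bar>"
proof (cases "x > 0")
  case True
  then have "x \<ge> 2" "y \<ge> 2" using assms by (auto simp: zero_less_mult_iff intro: even_pos_ge_2)
  then have "2 * b \<le> x * b" "2 * a \<le> y * a" using assms by (simp_all add: mult_right_mono)
  then show ?thesis by linarith
next
  case False
  then have "- x \<ge> 2" "- y \<ge> 2" using assms by (auto simp: zero_less_mult_iff intro: even_pos_ge_2)
  then have "2 * b \<le> (- x) * b" "2 * a \<le> (- y) * a"
    using assms mult_right_mono[of 2 "- x" b] mult_right_mono[of 2 "- y" a] by auto
  then show ?thesis by linarith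
qed

lemma sign_pattern_case1:
  fixes a b h :: int
  assumes "b \<ge> 0" "a \<ge> b" and h: "h = (if a = 0 \<and> b = 0 then 0 else (a - 1) * (b - 1))"
  shows "(h < 0 \<longleftrightarrow> a > 1 \<and> b = 0) \<and>
         (h = 0 \<longleftrightarrow> (a \<ge> 1 \<and> b = 1) \<or> (a, b) \<in> {(1, 0), (0, 0)}) \<and>
         (\<not> (a > 1 \<and> b = 0) \<and> \<not> ((a \<ge> 1 \<and> b = 1) \<or> (a, b) \<in> {(1, 0), (0, 0)}) \<longrightarrow> h > 0)"
proof -
  consider "b = 0" | "b = 1" | "b \<ge> 2" using assms(1) by linarith
  then show ?thesis
  proof cases
    case 3
    then have "(a - 1) * (b - 1) \<ge> 1 * 1" using assms(2) by (intro mult_mono) auto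
    then show ?thesis using 3 h by auto
  qed (use assms in auto)
qed

lemma sign_pattern_case35:
  fixes a b h :: int
  assumes "a > 0 \<or> (a = 0 \<and> b \<ge> 0)"
    and "b = 0 \<Longrightarrow> h = (if a = 0 then 0 else 1 - a)" and "b \<noteq> 0 \<Longrightarrow> h > 0"
  shows "(h < 0 \<longleftrightarrow> a > 1 \<and> b = 0) \<and>
         (h = 0 \<longleftrightarrow> (a, b) \<in> {(1, 0), (0, 0)}) \<and>
         (\<not> (a > 1 \<and> b = 0) \<and> (a, b) \<notin> {(1, 0), (0, 0)} \<longrightarrow> h > 0)"
  using assms by (cases "b = 0") auto

context coh_alg
begin

context
  fixes F B :: ivec
  assumes bplus: "ca_bplus r mu = 1" and IT: "ca_IT r mu = {vzero}"
    and bas: "basis_with_gram r mu 2 (two_basis F B) (gram2 0 1 0)"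
begin

lemma adjunction_class_case1_iff:
  "adjunction_class r mu (lincomb2 x F y B) \<longleftrightarrow> even x \<and> even y \<and> x * y > 0"
proof -
  note FB = basis2_Deg[OF bas] and g = basis2_Gamma[OF bas]
  have sig: "ca_sigma r mu = 0" by (rule ca_sigma_basis2[OF bplus bas]) simp
  have chi: "ca_chitilde r mu \<ge> 2" using ca_b1tilde_eq_0[OF IT] by (simp add: ca_chitilde_def)
  have "characteristic r mu (lincomb2 x F y B) \<longleftrightarrow> even x \<and> even y"
    using characteristic_basis2_iff[OF bas] FB g by (auto simp: Gamma_lincomb2_left)
  moreover have "G (lincomb2 x F y B) (lincomb2 x F y B) = 2 * (x * y)"
    using FB g by (simp add: Gamma_lincomb2)
  ultimately show ?thesis unfolding adjunction_class_def using sig chi IT by auto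
qed

lemma h_fun_case1:
  assumes ab: "a \<ge> 0" "b \<ge> 0" "a \<noteq> 0 \<or> b \<noteq> 0"
  shows "h_fun r mu (lincomb2 a F b B) = (a - 1) * (b - 1)"
proof -
  note FB = basis2_Deg[OF bas] and g = basis2_Gamma[OF bas]
  let ?A = "lincomb2 a F b B"
  have h: "h_c mu (lincomb2 x F y B) ?A = 1 + (2 * (a * b) - \<bar>x * b + y * a\<bar>) div 2" for x y
    using FB g lincomb2_eq_vzero_iff[OF bas] ab(3) by (simp add: h_c_def Gamma_lincomb2)
  show ?thesis
  proof (rule h_fun_eqI)
    show "adjunction_class r mu (lincomb2 2 F 2 B)" by (simp add: adjunction_class_case1_iff)
    have "\<bar>2 * b + 2 * a\<bar> = 2 * (a + b)" using ab by simp
    then show "h_c mu (lincomb2 2 F 2 B) ?A = (a - 1) * (b - 1)"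
      by (simp add: h algebra_simps)
  next
    fix c assume adj: "adjunction_class r mu c"
    obtain x y where c: "c = lincomb2 x F y B"
      using basis2_coords[OF bas characteristic_Deg[OF adjunction_class_characteristic[OF adj]]] .
    then have "2 * a + 2 * b \<le> \<bar>x * b + y * a\<bar>"
      using adj ab by (intro even_same_sign_abs_ge) (auto simp: adjunction_class_case1_iff)
    then have "(2 * (a * b) - \<bar>x * b + y * a\<bar>) div 2 \<le> (2 * (a * b - a - b)) div 2"
      by (intro zdiv_mono1) auto
    then show "h_c mu c ?A \<le> (a - 1) * (b - 1)" by (simp add: c h algebra_simps)
  qed
qed

lemma h_fun_sign_case1:
  assumes "a \<ge> \<bar>b\<bar>" and "G (lincomb2 a F b B) (lincomb2 a F b B) \<ge> 0"
  shows "(h_fun r mu (lincomb2 a F b B) < 0 \<longleftrightarrow> a > 1 \<and> b = 0) \<and>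
          (h_fun r mu (lincomb2 a F b B) = 0 \<longleftrightarrow> (a \<ge> 1 \<and> b = 1) \<or> (a, b) \<in> {(1, 0), (0, 0)}) \<and>
          (\<not> (a > 1 \<and> b = 0) \<and> \<not> ((a \<ge> 1 \<and> b = 1) \<or> (a, b) \<in> {(1, 0), (0, 0)}) \<longrightarrow>
             h_fun r mu (lincomb2 a F b B) > 0)"
proof (rule sign_pattern_case1)
  note FB = basis2_Deg[OF bas] and g = basis2_Gamma[OF bas]
  have "a * b \<ge> 0" using assms(2) FB g by (simp add: Gamma_lincomb2)
  then show "b \<ge> 0" using assms(1) mult_pos_neg[of a b] by linarith
  then show "a \<ge> b" using assms(1) by simp
  show "h_fun r mu (lincomb2 a F b B) = (if a = 0 \<and> b = 0 then 0 else (a - 1) * (b - 1))"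
    using \<open>b \<ge> 0\<close> \<open>a \<ge> b\<close> h_fun_case1 h_fun_vzero[of r mu "lincomb2 2 F 2 B"]
    by (auto simp: adjunction_class_case1_iff)
qed

end

context
  fixes F B :: ivec and bb :: int
  assumes bplus: "ca_bplus r mu = 1" and b1: "ca_b1tilde r mu = 2"
    and IT: "ca_IT r mu = {smul k F | k. True}"
    and bas: "basis_with_gram r mu 2 (two_basis F B) (gram2 0 1 bb)" and bb: "bb < 2"
begin

lemma generator_in_IT: "F \<in> ca_IT r mu"
  unfolding IT by (intro CollectI exI[of _ 1]) (simp add: smul_def)

lemma adjunction_class_Gamma_F_nonzero:
  assumes adj: "adjunction_class r mu c"
  shows "G c F \<noteq> 0"
proof
  assume cF: "G c F = 0"
  note FB = basis2_Deg[OF bas] and g = basis2_Gamma[OF bas]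
  have c: "c \<in> Deg r 2" using adj by (intro characteristic_Deg adjunction_class_characteristic)
  obtain x y where xy: "c = lincomb2 x F y B" using basis2_coords[OF bas c] .
  then have "y = 0" using cF FB g by (simp add: Gamma_lincomb2_left)
  then have "G c c = 0" using xy FB g by (simp add: Gamma_lincomb2)
  moreover have "ca_IT r mu \<noteq> {vzero}" using basis2_nonzero[OF bas] generator_in_IT by blast
  moreover have "G c z = 0" if "z \<in> ca_IT r mu" for z
    using that IT cF c FB(1) by (auto simp: Gamma_smul_right)
  ultimately show False
    using adj ca_sigma_basis2[OF bplus bas bb] unfolding adjunction_class_def by auto
qed

lemma adjunction_class_witness: "adjunction_class r mu (lincomb2 (- bb) F 2 B)"
proof -
  note FB = basis2_Deg[OF bas] and g = basis2_Gamma[OF bas]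
  let ?c = "lincomb2 (- bb) F 2 B"
  have "2 * ca_chitilde r mu + 3 * ca_sigma r mu \<le> 0"
    using basis2_rank_le_2[OF bas] by (simp add: ca_chitilde_def b1 ca_sigma_basis2[OF bplus bas bb])
  moreover have "G ?c ?c = 0" using FB g by (simp add: Gamma_lincomb2)
  moreover have cF: "G ?c F = 2" and "G ?c B = bb" using FB g by (simp_all add: Gamma_lincomb2_left)
  moreover have "characteristic r mu ?c"
    using characteristic_basis2_iff[OF bas] FB cF \<open>G ?c B = bb\<close> by simp
  moreover have "\<exists>x\<in>ca_IT r mu. G ?c x \<noteq> 0" using generator_in_IT cF by force
  ultimately show ?thesis unfolding adjunction_class_def by simp
qed

lemma h_fun_F_axis:
  assumes "a \<ge> 1"
  shows "h_fun r mu (lincomb2 a F 0 B) = 1 - a"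
proof -
  note FB = basis2_Deg[OF bas] and g = basis2_Gamma[OF bas]
  have "G (lincomb2 (- bb) F 2 B) F = 2" using FB g by (simp add: Gamma_lincomb2_left)
  then show ?thesis
    unfolding lincomb2_zero_right using assms
    by (intro h_fun_smul_isotropic[OF FB(1) basis2_nonzero[OF bas] g(1)
          adjunction_class_Gamma_F_nonzero adjunction_class_witness])
qed

lemma h_fun_pos_off_F_axis:
  assumes "b \<noteq> 0" and sq: "G (lincomb2 a F b B) (lincomb2 a F b B) \<ge> 0"
  shows "h_fun r mu (lincomb2 a F b B) > 0"
proof -
  note FB = basis2_Deg[OF bas] and g = basis2_Gamma[OF bas]
  let ?c = "lincomb2 (- bb) F 2 B" and ?A = "lincomb2 a F b B"
  have AA: "G ?A ?A = b * (2 * a + b * bb)" and cA: "G ?c ?A = 2 * a + b * bb"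
    using FB g by (simp_all add: Gamma_lincomb2 algebra_simps)
  have "1 \<le> \<bar>b\<bar>" using \<open>b \<noteq> 0\<close> by arith
  then have "\<bar>2 * a + b * bb\<bar> \<le> \<bar>b\<bar> * \<bar>2 * a + b * bb\<bar>"
    using mult_right_mono[of 1 "\<bar>b\<bar>" "\<bar>2 * a + b * bb\<bar>"] by simp
  also have "\<dots> = G ?A ?A" using AA sq by (simp add: abs_mult[symmetric])
  finally have "h_c mu ?c ?A \<ge> 1"
    using \<open>b \<noteq> 0\<close> lincomb2_eq_vzero_iff[OF bas] by (simp add: h_c_def cA)
  then show ?thesis using h_fun_ge[OF adjunction_class_witness, of ?A] by linarith
qed

lemma h_fun_sign_case35:
  assumes "a > 0 \<or> (a = 0 \<and> b \<ge> 0)" and "G (lincomb2 a F b B) (lincomb2 a F b B) \<ge> 0"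
  shows "(h_fun r mu (lincomb2 a F b B) < 0 \<longleftrightarrow> a > 1 \<and> b = 0) \<and>
          (h_fun r mu (lincomb2 a F b B) = 0 \<longleftrightarrow> (a, b) \<in> {(1, 0), (0, 0)}) \<and>
          (\<not> (a > 1 \<and> b = 0) \<and> (a, b) \<notin> {(1, 0), (0, 0)} \<longrightarrow>
             h_fun r mu (lincomb2 a F b B) > 0)"
  using assms h_fun_F_axis h_fun_pos_off_F_axis h_fun_vzero[OF adjunction_class_witness]
  by (intro sign_pattern_case35) auto

end

end

section \<open>Case (2)\<close>

lemma even_quadratic_form:
  fixes M :: "nat \<Rightarrow> nat \<Rightarrow> int"
  assumes sym: "\<And>i j. M i j = M j i" and diag: "\<And>i. even (M i i)"
  shows "even (\<Sum>i<n. \<Sum>j<n. a i * a j * M i j)"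
proof (induction n)
  case (Suc n)
  let ?f = "\<lambda>i j. a i * a j * M i j"
  have "(\<Sum>i<Suc n. \<Sum>j<Suc n. ?f i j)
      = (\<Sum>i<n. \<Sum>j<n. ?f i j) + (\<Sum>i<n. ?f i n) + (\<Sum>j<n. ?f n j) + ?f n n"
    by (simp add: sum.distrib)
  also have "(\<Sum>j<n. ?f n j) = (\<Sum>i<n. ?f i n)"
    using sym by (intro sum.cong) (auto simp: mult.commute)
  finally have "(\<Sum>i<Suc n. \<Sum>j<Suc n. ?f i j)
      = (\<Sum>i<n. \<Sum>j<n. ?f i j) + 2 * (\<Sum>i<n. ?f i n) + a n * a n * M n n"
    by simp
  then show ?case using Suc.IH diag by (simp del: sum.lessThan_Suc)
qed simp

lemma E8_sym: "E8 i j = E8 j i"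
  unfolding E8_def E8_adj_def by (auto simp: insert_commute)

lemma U_minus_E8_sym: "U_minus_E8 i j = U_minus_E8 j i"
  unfolding U_minus_E8_def using E8_sym by auto

lemma U_minus_E8_diag_even: "even (U_minus_E8 i i)"
  unfolding U_minus_E8_def E8_def by auto

context coh_alg
begin

lemma even_form_of_basis:
  assumes bas: "basis_with_gram r mu n e M"
    and sym: "\<And>i j. M i j = M j i" and diag: "\<And>i. even (M i i)" and A: "A \<in> Deg r 2"
  shows "even (G A A)"
proof -
  have eD: "\<And>i. i < n \<Longrightarrow> e i \<in> Deg r 2"
    and eG: "\<And>i j. i < n \<Longrightarrow> j < n \<Longrightarrow> G (e i) (e j) = M i j"
    using bas unfolding basis_with_gram_def by blast+
  obtain a where a: "A = (\<lambda>k. \<Sum>i<n. a i * e i k)"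
    using bas A unfolding basis_with_gram_def by (meson ex1_implies_ex)
  have "G A A = (\<Sum>i<n. \<Sum>j<n. a i * a j * G (e i) (e j))" unfolding a using eD by (rule Gamma_sum_sum)
  also have "\<dots> = (\<Sum>i<n. \<Sum>j<n. a i * a j * M i j)" by (simp add: eG)
  moreover have "even (\<Sum>i<n. \<Sum>j<n. a i * a j * M i j)" by (intro even_quadratic_form sym diag)
  ultimately show ?thesis by simp
qed

lemma ca_bminus_U_minus_E8:
  assumes bas: "basis_with_gram r mu 10 e U_minus_E8"
  shows "ca_bminus r mu \<ge> 2"
proof -
  have eD: "\<And>i. i < 10 \<Longrightarrow> e i \<in> Deg r 2"
    and eG: "\<And>i j. i < 10 \<Longrightarrow> j < 10 \<Longrightarrow> G (e i) (e j) = U_minus_E8 i j"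
    using bas unfolding basis_with_gram_def by blast+
  \<comment> \<open>e 2 and e 4 are orthogonal (-2)-vectors of the -E8 summand\<close>
  let ?v = "\<lambda>i::nat. if i = 0 then e 2 else e 4"
  have g: "G (e 2) (e 2) = -2" "G (e 2) (e 4) = 0" "G (e 4) (e 2) = 0" "G (e 4) (e 4) = -2"
    using eG[of 2 2] eG[of 2 4] eG[of 4 2] eG[of 4 4]
    by (simp_all add: U_minus_E8_def E8_def E8_adj_def doubleton_eq_iff)
  have "posdef_gram 2 (\<lambda>i j. - real_of_int (G (?v i) (?v j)))"
    unfolding posdef_gram_def
  proof (intro allI impI)
    fix x :: "nat \<Rightarrow> real" assume "\<exists>i<2. x i \<noteq> 0"
    then have "x 0 \<noteq> 0 \<or> x 1 \<noteq> 0" by (auto simp: less_2_cases_iff)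
    then have "x 0 * x 0 + x 1 * x 1 > 0" by (simp add: sum_squares_gt_zero_iff)
    moreover have "{..<2::nat} = {0, 1}" by auto
    ultimately show "(\<Sum>i<2. \<Sum>j<2. x i * - real_of_int (G (?v i) (?v j)) * x j) > 0"
      by (simp add: g algebra_simps)
  qed
  then have "neg_def_family 2 ?v" using eD by (simp add: neg_def_family_def)
  then show ?thesis by (rule ca_bminus_ge)
qed

lemma h_fun_pos_of_even_form:
  assumes even: "\<And>A. A \<in> Deg r 2 \<Longrightarrow> even (G A A)" and sig: "ca_sigma r mu < 0"
    and A: "A \<in> Deg r 2" "A \<noteq> vzero" "G A A \<ge> 0"
  shows "h_fun r mu A > 0"
proof -
  have "characteristic r mu vzero"
    using even Gamma_vzero_left by (simp add: characteristic_def even_iff_mod_2_eq_zero)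
  then have "adjunction_class r mu vzero"
    using sig Gamma_vzero_left[OF Deg_vzero] by (simp add: adjunction_class_def)
  moreover have "h_c mu vzero A = 1 + G A A div 2"
    using A(1,2) by (simp add: h_c_def Gamma_vzero_left)
  ultimately show ?thesis using h_fun_ge[of r mu vzero A] A(3) by simp
qed

lemma h_fun_pos_case2:
  assumes "ca_bplus r mu = 1" and bas: "basis_with_gram r mu 10 e U_minus_E8"
    and "A \<in> Deg r 2" "A \<noteq> vzero" "G A A \<ge> 0"
  shows "h_fun r mu A > 0"
proof (rule h_fun_pos_of_even_form)
  show "even (G A' A')" if "A' \<in> Deg r 2" for A'
    using even_form_of_basis[OF bas U_minus_E8_sym U_minus_E8_diag_even that] .
  show "ca_sigma r mu < 0"
    using assms(1) ca_bminus_U_minus_E8[OF bas] by (simp add: ca_sigma_def)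
qed (use assms in auto)

end

theorem mainTheorem10:
  fixes r :: "nat \<Rightarrow> nat" and mu :: cprod
  assumes alg: "cohomology_algebra r mu"
    and bplus: "ca_bplus r mu = 1"
    and chi: "2 * ca_chitilde r mu + 3 * ca_sigma r mu \<ge> 0"
  shows
   "(\<forall>F B. ca_IT r mu = {vzero} \<and> basis_with_gram r mu 2 (two_basis F B) (gram2 0 1 0) \<longrightarrow>
       (\<forall>a b :: int. a \<ge> \<bar>b\<bar> \<and> ca_Gamma mu (lincomb2 a F b B) (lincomb2 a F b B) \<ge> 0 \<longrightarrow>
          (h_fun r mu (lincomb2 a F b B) < 0 \<longleftrightarrow> a > 1 \<and> b = 0) \<and>
          (h_fun r mu (lincomb2 a F b B) = 0 \<longleftrightarrow> (a \<ge> 1 \<and> b = 1) \<or> (a, b) \<in> {(1, 0), (0, 0)}) \<and>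
          (\<not> (a > 1 \<and> b = 0) \<and> \<not> ((a \<ge> 1 \<and> b = 1) \<or> (a, b) \<in> {(1, 0), (0, 0)}) \<longrightarrow>
             h_fun r mu (lincomb2 a F b B) > 0)))
  \<and> (\<forall>F B. ca_b1tilde r mu = 2 \<and> ca_IT r mu = {smul k F | k. True} \<and>
           basis_with_gram r mu 2 (two_basis F B) (gram2 0 1 0) \<longrightarrow>
       (\<forall>a b :: int. (a > 0 \<or> (a = 0 \<and> b \<ge> 0)) \<and>
                    ca_Gamma mu (lincomb2 a F b B) (lincomb2 a F b B) \<ge> 0 \<longrightarrow>
          (h_fun r mu (lincomb2 a F b B) < 0 \<longleftrightarrow> a > 1 \<and> b = 0) \<and>
          (h_fun r mu (lincomb2 a F b B) = 0 \<longleftrightarrow> (a, b) \<in> {(1, 0), (0, 0)}) \<and>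
          (\<not> (a > 1 \<and> b = 0) \<and> (a, b) \<notin> {(1, 0), (0, 0)} \<longrightarrow>
             h_fun r mu (lincomb2 a F b B) > 0)))
  \<and> (\<forall>F B. ca_b1tilde r mu = 2 \<and> ca_IT r mu = {smul k F | k. True} \<and>
           basis_with_gram r mu 2 (two_basis F B) (gram2 0 1 1) \<longrightarrow>
       (\<forall>a b :: int. (a > 0 \<or> (a = 0 \<and> b \<ge> 0)) \<and>
                    ca_Gamma mu (lincomb2 a F b B) (lincomb2 a F b B) \<ge> 0 \<longrightarrow>
          (h_fun r mu (lincomb2 a F b B) < 0 \<longleftrightarrow> a > 1 \<and> b = 0) \<and>
          (h_fun r mu (lincomb2 a F b B) = 0 \<longleftrightarrow> (a, b) \<in> {(1, 0), (0, 0)}) \<and>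
          (\<not> (a > 1 \<and> b = 0) \<and> (a, b) \<notin> {(1, 0), (0, 0)} \<longrightarrow>
             h_fun r mu (lincomb2 a F b B) > 0)))
  \<and> (\<forall>e. ca_IT r mu = {vzero} \<and> basis_with_gram r mu 10 e U_minus_E8 \<longrightarrow>
       (\<forall>A\<in>Deg r 2. A \<noteq> vzero \<and> ca_Gamma mu A A \<ge> 0 \<longrightarrow> h_fun r mu A > 0))"
proof -
  interpret coh_alg r mu by (rule coh_alg.intro) (fact alg)
  show ?thesis
    using h_fun_sign_case1[OF bplus] h_fun_sign_case35[OF bplus] h_fun_pos_case2[OF bplus]
    by (intro conjI allI impI ballI; elim conjE) auto
qed

end
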